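(* Let $n\ge3$, $\boldsymbol\ell$ positive lengths, $\mu,\tau^*\in\mathbb{R}$, and $\xi$, $N>0$ smooth functions on $T^n$ depending only on $s^1$, with $\int_{T^n}\xi N\,dV_{\boldsymbol\ell}=0$. Consider the CTS-H$^*$ conformal data set $(g_{\boldsymbol\ell},\mu\sigma^\flat_{\boldsymbol\ell},\tau^*,\xi,N)$. (1) If $\mu$ and $\tau^*$ are nonzero and have the same sign, there is a solution $(\phi,W)$ of the CTS-H$^*$ equations with $\phi\equiv c=(\mu/\tau^* )^{1/q}$, where $W$ is parallel to $\partial_{s^1}$ and $\frac1{2N}\mathcal{L}_{g_{\boldsymbol\ell}}W=c^{-q}\xi\,\sigma^\flat_{\boldsymbol\ell}$. The generated solution of the constraint equations is $$\bar g=g_{r\boldsymbol\ell},\qquad \bar K=\bar\tau\,(r\ell_1)^2(ds^1)^2,\qquad \bar\tau=\tau^*+c^{-2q}\xi,\qquad r=c^{(q-2)/2}=(\mu/\tau^* )^{1/n}.$$ (2) If $\mu=\tau^*=0$, then for every $c>0$ there is a solution $(\phi,W)$ of the CTS-H$^*$ equations with $\phi\equiv c$ and $\frac1{2N}\mathcal{L}_{g_{\boldsymbol\ell}}W=c^{-q}\xi\,\sigma^\flat_{\boldsymbol\ell}$, and the associated solution of the constraint equations is $\bar g=g_{r\boldsymbol\ell}$, $\bar K=\bar\tau\,(r\ell_1)^2(ds^1)^2$ with $\bar\tau=c^{-2q}\xi$ and $r=c^{(q-2)/2}$.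
   Context: $q=\frac{2n}{n-2}$, $\kappa=\frac{n-1}{n}$. $T^n=(\mathbb{R}/\mathbb{Z})^n$ with unit coordinates $(s^1,\ldots,s^n)$; $g_{\boldsymbol\ell}=\sum_k\ell_k^2(ds^k)^2$ with volume form $dV_{\boldsymbol\ell}$; $r\boldsymbol\ell=(r\ell_1,\ldots,r\ell_n)$; $\sigma^\flat_{\boldsymbol\ell}=\kappa\ell_1^2(ds^1)^2-\frac1n\sum_{k\ge2}\ell_k^2(ds^k)^2$ (transverse-traceless for $g_{\boldsymbol\ell}$). $\mathcal{L}_gW=L_Wg-\frac2n(\mathrm{div}_gW)g$. CTS-H$^*$ (lapse-scaled mean curvature) method: data $(g,\sigma,\tau^*,\xi,N)$ with $\sigma$ transverse-traceless, $\tau^*$ constant, $N>0$, $\int\xi N\,dV_g=0$. A solution of the CTS-H$^*$ equations is a pair $(\phi,W)$, $\phi>0$ a function and $W$ a vector field, such that $$\bar g=\phi^{q-2}g,\qquad \bar K=\phi^{-2}\Big(\sigma+\tfrac1{2N}\mathcal{L}_gW\Big)+\frac{\tau^*+\phi^{-2q}\xi}{n}\bar g$$ solves the Einstein constraint equations $R_{\bar g}-|\bar K|^2_{\bar g}+(\mathrm{tr}_{\bar g}\bar K)^2=0$, $\mathrm{div}_{\bar g}\bar K=d(\mathrm{tr}_{\bar g}\bar K)$; this $(\bar g,\bar K)$ is the generated solution. *)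

theory Defs
  imports "HOL-Analysis.Analysis"
begin

text \<open>The torus T^n = (R/Z)^n is modelled by Z^n-periodic objects on R^n = real^'n,
  in the unit coordinates s. Tensor fields are given by their coordinate components.\<close>

definition pd :: "'n::finite \<Rightarrow> (real^'n \<Rightarrow> real) \<Rightarrow> real^'n \<Rightarrow> real" where
  "pd k f x = deriv (\<lambda>t. f (x + t *\<^sub>R axis k 1)) 0"

fun pds :: "'n::finite list \<Rightarrow> (real^'n \<Rightarrow> real) \<Rightarrow> real^'n \<Rightarrow> real" where
  "pds [] f = f"
| "pds (k # ks) f = pd k (pds ks f)"

definition smooth_fn :: "(real^'n::finite \<Rightarrow> real) \<Rightarrow> bool" where
  "smooth_fn f \<longleftrightarrow> (\<forall>ks x. pds ks f differentiable (at x))"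

definition periodic_fn :: "(real^'n::finite \<Rightarrow> 'a) \<Rightarrow> bool" where
  "periodic_fn f \<longleftrightarrow> (\<forall>x k. f (x + axis k 1) = f x)"

definition only_coord :: "'n::finite \<Rightarrow> (real^'n \<Rightarrow> real) \<Rightarrow> bool" where
  "only_coord i1 f \<longleftrightarrow> (\<exists>h. \<forall>x. f x = h (x $ i1))"

definition q_of :: "nat \<Rightarrow> real" where
  "q_of n = 2 * real n / (real n - 2)"

definition kappa_of :: "nat \<Rightarrow> real" where
  "kappa_of n = (real n - 1) / real n"

definition ginv :: "(real^'n::finite \<Rightarrow> 'n \<Rightarrow> 'n \<Rightarrow> real) \<Rightarrow> real^'n \<Rightarrow> 'n \<Rightarrow> 'n \<Rightarrow> real" where
  "ginv g x i j = matrix_inv (\<chi> a b. g x a b) $ i $ j"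

definition christ :: "(real^'n::finite \<Rightarrow> 'n \<Rightarrow> 'n \<Rightarrow> real) \<Rightarrow> 'n \<Rightarrow> 'n \<Rightarrow> 'n \<Rightarrow> real^'n \<Rightarrow> real" where
  "christ g k i j x = (1/2) * (\<Sum>l\<in>UNIV. ginv g x k l *
      (pd i (\<lambda>y. g y j l) x + pd j (\<lambda>y. g y i l) x - pd l (\<lambda>y. g y i j) x))"

definition ricci :: "(real^'n::finite \<Rightarrow> 'n \<Rightarrow> 'n \<Rightarrow> real) \<Rightarrow> 'n \<Rightarrow> 'n \<Rightarrow> real^'n \<Rightarrow> real" where
  "ricci g i j x =
     (\<Sum>k\<in>UNIV. pd k (christ g k i j) x) - (\<Sum>k\<in>UNIV. pd j (christ g k i k) x)
     + (\<Sum>k\<in>UNIV. \<Sum>l\<in>UNIV. christ g k k l x * christ g l i j x)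
     - (\<Sum>k\<in>UNIV. \<Sum>l\<in>UNIV. christ g k j l x * christ g l i k x)"

definition scal :: "(real^'n::finite \<Rightarrow> 'n \<Rightarrow> 'n \<Rightarrow> real) \<Rightarrow> real^'n \<Rightarrow> real" where
  "scal g x = (\<Sum>i\<in>UNIV. \<Sum>j\<in>UNIV. ginv g x i j * ricci g i j x)"

definition trace_g :: "(real^'n::finite \<Rightarrow> 'n \<Rightarrow> 'n \<Rightarrow> real) \<Rightarrow> (real^'n \<Rightarrow> 'n \<Rightarrow> 'n \<Rightarrow> real) \<Rightarrow> real^'n \<Rightarrow> real" where
  "trace_g g K x = (\<Sum>i\<in>UNIV. \<Sum>j\<in>UNIV. ginv g x i j * K x i j)"

definition normsq_g :: "(real^'n::finite \<Rightarrow> 'n \<Rightarrow> 'n \<Rightarrow> real) \<Rightarrow> (real^'n \<Rightarrow> 'n \<Rightarrow> 'n \<Rightarrow> real) \<Rightarrow> real^'n \<Rightarrow> real" where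
  "normsq_g g K x = (\<Sum>i\<in>UNIV. \<Sum>j\<in>UNIV. \<Sum>a\<in>UNIV. \<Sum>b\<in>UNIV.
      ginv g x i a * ginv g x j b * K x i j * K x a b)"

definition covK :: "(real^'n::finite \<Rightarrow> 'n \<Rightarrow> 'n \<Rightarrow> real) \<Rightarrow> (real^'n \<Rightarrow> 'n \<Rightarrow> 'n \<Rightarrow> real) \<Rightarrow> 'n \<Rightarrow> 'n \<Rightarrow> 'n \<Rightarrow> real^'n \<Rightarrow> real" where
  "covK g K k i j x = pd k (\<lambda>y. K y i j) x
      - (\<Sum>l\<in>UNIV. christ g l k i x * K x l j) - (\<Sum>l\<in>UNIV. christ g l k j x * K x i l)"

definition divK :: "(real^'n::finite \<Rightarrow> 'n \<Rightarrow> 'n \<Rightarrow> real) \<Rightarrow> (real^'n \<Rightarrow> 'n \<Rightarrow> 'n \<Rightarrow> real) \<Rightarrow> 'n \<Rightarrow> real^'n \<Rightarrow> real" where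
  "divK g K j x = (\<Sum>i\<in>UNIV. \<Sum>k\<in>UNIV. ginv g x i k * covK g K k i j x)"

definition divW :: "(real^'n::finite \<Rightarrow> 'n \<Rightarrow> 'n \<Rightarrow> real) \<Rightarrow> (real^'n \<Rightarrow> real^'n) \<Rightarrow> real^'n \<Rightarrow> real" where
  "divW g W x = (\<Sum>k\<in>UNIV. pd k (\<lambda>y. W y $ k) x)
      + (\<Sum>k\<in>UNIV. \<Sum>l\<in>UNIV. christ g k k l x * W x $ l)"

definition lie_g :: "(real^'n::finite \<Rightarrow> 'n \<Rightarrow> 'n \<Rightarrow> real) \<Rightarrow> (real^'n \<Rightarrow> real^'n) \<Rightarrow> real^'n \<Rightarrow> 'n \<Rightarrow> 'n \<Rightarrow> real" where
  "lie_g g W x i j = (\<Sum>k\<in>UNIV. W x $ k * pd k (\<lambda>y. g y i j) x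
      + g x k j * pd i (\<lambda>y. W y $ k) x + g x i k * pd j (\<lambda>y. W y $ k) x)"

definition conf_killing :: "(real^'n::finite \<Rightarrow> 'n \<Rightarrow> 'n \<Rightarrow> real) \<Rightarrow> (real^'n \<Rightarrow> real^'n) \<Rightarrow> real^'n \<Rightarrow> 'n \<Rightarrow> 'n \<Rightarrow> real" where
  "conf_killing g W x i j = lie_g g W x i j - 2 / real CARD('n) * divW g W x * g x i j"

definition einstein_constraints :: "(real^'n::finite \<Rightarrow> 'n \<Rightarrow> 'n \<Rightarrow> real) \<Rightarrow> (real^'n \<Rightarrow> 'n \<Rightarrow> 'n \<Rightarrow> real) \<Rightarrow> bool" where
  "einstein_constraints g K \<longleftrightarrow>
     (\<forall>x. scal g x - normsq_g g K x + (trace_g g K x)^2 = 0) \<and>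
     (\<forall>x j. divK g K j x = pd j (trace_g g K) x)"

definition cts_gbar :: "(real^'n::finite \<Rightarrow> 'n \<Rightarrow> 'n \<Rightarrow> real) \<Rightarrow> (real^'n \<Rightarrow> real) \<Rightarrow> real^'n \<Rightarrow> 'n \<Rightarrow> 'n \<Rightarrow> real" where
  "cts_gbar g \<phi> x i j = \<phi> x powr (q_of CARD('n) - 2) * g x i j"

definition cts_Kbar :: "(real^'n::finite \<Rightarrow> 'n \<Rightarrow> 'n \<Rightarrow> real) \<Rightarrow> (real^'n \<Rightarrow> 'n \<Rightarrow> 'n \<Rightarrow> real) \<Rightarrow> real
     \<Rightarrow> (real^'n \<Rightarrow> real) \<Rightarrow> (real^'n \<Rightarrow> real) \<Rightarrow> (real^'n \<Rightarrow> real) \<Rightarrow> (real^'n \<Rightarrow> real^'n)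
     \<Rightarrow> real^'n \<Rightarrow> 'n \<Rightarrow> 'n \<Rightarrow> real" where
  "cts_Kbar g \<sigma> \<tau>s \<xi> N \<phi> W x i j =
     \<phi> x powr (-2) * (\<sigma> x i j + conf_killing g W x i j / (2 * N x))
     + (\<tau>s + \<phi> x powr (- 2 * q_of CARD('n)) * \<xi> x) / real CARD('n) * cts_gbar g \<phi> x i j"

definition cts_solution :: "(real^'n::finite \<Rightarrow> 'n \<Rightarrow> 'n \<Rightarrow> real) \<Rightarrow> (real^'n \<Rightarrow> 'n \<Rightarrow> 'n \<Rightarrow> real) \<Rightarrow> real
     \<Rightarrow> (real^'n \<Rightarrow> real) \<Rightarrow> (real^'n \<Rightarrow> real) \<Rightarrow> (real^'n \<Rightarrow> real) \<Rightarrow> (real^'n \<Rightarrow> real^'n) \<Rightarrow> bool" where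
  "cts_solution g \<sigma> \<tau>s \<xi> N \<phi> W \<longleftrightarrow>
     (\<forall>x. \<phi> x > 0) \<and> smooth_fn \<phi> \<and> periodic_fn \<phi> \<and>
     (\<forall>k. smooth_fn (\<lambda>x. W x $ k)) \<and> periodic_fn W \<and>
     einstein_constraints (cts_gbar g \<phi>) (cts_Kbar g \<sigma> \<tau>s \<xi> N \<phi> W)"

definition g_len :: "real^'n::finite \<Rightarrow> real^'n \<Rightarrow> 'n \<Rightarrow> 'n \<Rightarrow> real" where
  "g_len l x i j = (if i = j then (l $ i)^2 else 0)"

text \<open>sigma-flat, with distinguished first coordinate i1\<close>
definition sigma_flat :: "'n::finite \<Rightarrow> real^'n \<Rightarrow> real^'n \<Rightarrow> 'n \<Rightarrow> 'n \<Rightarrow> real" where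
  "sigma_flat i1 l x i j = (if i = j then
      (if i = i1 then kappa_of CARD('n) * (l $ i)^2 else - (1 / real CARD('n)) * (l $ i)^2) else 0)"

text \<open>integral over T^n against dV_g (fundamental domain [0,1]^n)\<close>
definition vol_int :: "(real^'n::finite \<Rightarrow> 'n \<Rightarrow> 'n \<Rightarrow> real) \<Rightarrow> (real^'n \<Rightarrow> real) \<Rightarrow> real" where
  "vol_int g f = integral (cbox 0 One) (\<lambda>x. f x * sqrt (det (\<chi> a b. g x a b)))"

end

theory Submission
  imports Defs
begin

text \<open>
  With a constant conformal factor phi = c and mu = tau* c^q, only the vector field W remains to be
  found. Since xi and N depend on s^1 only and xi N has zero mean on the torus, xi N has a periodic
  antiderivative F in s^1, and W = c^-q F(s^1) d/ds^1 satisfies L W = 2 c^-q xi N sigma_flat.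
  Both summands of K then carry the same factor c^(q-2) tau, tau = tau* + c^-2q xi, and
  sigma_flat + g/n = l_1^2 (ds^1)^2, so K = tau (r l_1)^2 (ds^1)^2 with respect to the flat metric
  g_(r l). For a flat metric and a tensor Theta(s^1) (ds^1)^2 the constraints are immediate:
  |K|^2 = (tr K)^2, and div K = d(tr K) = Theta' / l_1^2 ds^1.
\<close>

definition smooth_real :: "(real \<Rightarrow> real) \<Rightarrow> bool" where
  "smooth_real F \<longleftrightarrow> (\<forall>m x. (deriv ^^ m) F differentiable at x)"

lemma smooth_real_differentiable: "smooth_real F \<Longrightarrow> F differentiable at x"
  unfolding smooth_real_def by (metis funpow_0)

lemma smooth_real_has_deriv: "smooth_real F \<Longrightarrow> (F has_real_derivative deriv F x) (at x)"
  using smooth_real_differentiable DERIV_deriv_iff_real_differentiable by blast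

lemma smooth_real_deriv: "smooth_real F \<Longrightarrow> smooth_real (deriv F)"
  unfolding smooth_real_def by (metis funpow_Suc_right o_apply)

lemma smooth_real_const: "smooth_real (\<lambda>t. c)"
proof -
  have "(deriv ^^ m) (\<lambda>t::real. c) = (\<lambda>t. if m = 0 then c else 0)" for m
    by (induction m) auto
  then show ?thesis
    unfolding smooth_real_def by simp
qed

lemma higher_deriv_add:
  fixes A B :: "real \<Rightarrow> real"
  assumes "\<And>j x. j < m \<Longrightarrow> (deriv ^^ j) A differentiable at x"
      and "\<And>j x. j < m \<Longrightarrow> (deriv ^^ j) B differentiable at x"
  shows "(deriv ^^ m) (\<lambda>t. A t + B t) = (\<lambda>t. (deriv ^^ m) A t + (deriv ^^ m) B t)"
  using assms
proof (induction m)
  case 0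
  then show ?case by simp
next
  case (Suc m)
  have "deriv (\<lambda>t. (deriv ^^ m) A t + (deriv ^^ m) B t) t
          = deriv ((deriv ^^ m) A) t + deriv ((deriv ^^ m) B) t" for t
    using Suc.prems[OF lessI]
    by (intro DERIV_imp_deriv DERIV_add) (simp_all add: DERIV_deriv_iff_real_differentiable)
  then show ?case
    using Suc by simp
qed

lemma smooth_real_add: "smooth_real A \<Longrightarrow> smooth_real B \<Longrightarrow> smooth_real (\<lambda>t. A t + B t)"
  unfolding smooth_real_def by (simp add: higher_deriv_add)

lemma smooth_real_mult:
  assumes "smooth_real A" and "smooth_real B"
  shows "smooth_real (\<lambda>t. A t * B t)"
proof -
  have "\<forall>A B. smooth_real A \<longrightarrow> smooth_real B \<longrightarrow>
          (\<forall>x. (deriv ^^ m) (\<lambda>t. A t * B t) differentiable at x)"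
    for m
  proof (induction m rule: less_induct)
    case (less m)
    show ?case
    proof (intro allI impI)
      fix A B x
      assume A: "smooth_real A" and B: "smooth_real B"
      show "(deriv ^^ m) (\<lambda>t. A t * B t) differentiable at x"
      proof (cases m)
        case 0
        then show ?thesis
          using A B by (simp add: differentiable_mult smooth_real_differentiable)
      next
        case (Suc k)
        have "deriv (\<lambda>t. A t * B t) = (\<lambda>t. A t * deriv B t + deriv A t * B t)"
          using A B by (intro ext DERIV_imp_deriv) (auto intro!: derivative_eq_intros smooth_real_has_deriv)
        moreover have IH: "(deriv ^^ j) (\<lambda>t. A t * deriv B t) differentiable at y"
            "(deriv ^^ j) (\<lambda>t. deriv A t * B t) differentiable at y" if "j \<le> k" for j y
          using less.IH[rule_format] A B Suc that smooth_real_deriv by auto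
        moreover have "(deriv ^^ k) (\<lambda>t. A t * deriv B t + deriv A t * B t) =
            (\<lambda>t. (deriv ^^ k) (\<lambda>t. A t * deriv B t) t + (deriv ^^ k) (\<lambda>t. deriv A t * B t) t)"
          using IH by (intro higher_deriv_add) auto
        ultimately show ?thesis
          using Suc by (simp add: funpow_Suc_right del: funpow.simps)
      qed
    qed
  qed
  with assms show ?thesis
    unfolding smooth_real_def by blast
qed

lemma smooth_real_antiderivative:
  assumes "smooth_real h" and "\<And>t. (F has_real_derivative h t) (at t)"
  shows "smooth_real F"
  unfolding smooth_real_def
proof (intro allI)
  fix m x
  have "deriv F = h"
    using assms(2) by (intro ext DERIV_imp_deriv)
  then show "(deriv ^^ m) F differentiable at x"
    using assms real_differentiable_def unfolding smooth_real_def
    by (cases m) (auto simp: funpow_Suc_right simp del: funpow.simps)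
qed

lemma pd_const: "pd k (\<lambda>y. c) x = 0"
  by (simp add: pd_def)

lemma pd_if: "pd k (\<lambda>y. if P then f y else g y) x = (if P then pd k f x else pd k g x)"
  by simp

lemma pd_coord:
  fixes D :: "real \<Rightarrow> real" and i k :: "'n::finite"
  assumes "D differentiable at (x $ i)"
  shows "pd k (\<lambda>y. D (y $ i)) x = (if k = i then deriv D (x $ i) else 0)"
proof (cases "k = i")
  case True
  have "(\<lambda>t. D ((x + t *\<^sub>R axis k 1) $ i)) = (\<lambda>t. D (t + x $ i))"
    using True by (simp add: axis_def add.commute)
  moreover have "((\<lambda>t. D (t + x $ i)) has_real_derivative deriv D (x $ i)) (at 0)"
    using assms DERIV_shift[of D "deriv D (x $ i)" 0 "x $ i"]
    by (simp add: DERIV_deriv_iff_real_differentiable)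
  ultimately show ?thesis
    unfolding pd_def using True by (simp add: DERIV_imp_deriv)
next
  case False
  then show ?thesis
    by (simp add: pd_def axis_def)
qed

lemma pds_coord:
  fixes i :: "'n::finite"
  assumes "smooth_real G"
  obtains H where "smooth_real H" "pds ks (\<lambda>x::real^'n. G (x $ i)) = (\<lambda>x. H (x $ i))"
proof (induction ks arbitrary: thesis)
  case Nil
  then show ?case using assms by simp
next
  case (Cons k ks)
  then obtain H where H: "smooth_real H" "pds ks (\<lambda>x::real^'n. G (x $ i)) = (\<lambda>x. H (x $ i))"
    by blast
  have "pds (k # ks) (\<lambda>x::real^'n. G (x $ i)) = (\<lambda>x. (if k = i then deriv H else (\<lambda>_. 0)) (x $ i))"
    using H by (intro ext) (simp add: pd_coord smooth_real_differentiable)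
  moreover have "smooth_real (if k = i then deriv H else (\<lambda>_. 0))"
    using H by (simp add: smooth_real_deriv smooth_real_const)
  ultimately show ?case
    using Cons.prems by blast
qed

lemma differentiable_coord:
  fixes i :: "'n::finite"
  assumes "G differentiable at (x $ i)"
  shows "(\<lambda>x::real^'n. G (x $ i)) differentiable at x"
  using differentiable_chain_at[OF bounded_linear_imp_differentiable[OF bounded_linear_vec_nth] assms]
  by (simp add: o_def)

lemma smooth_fn_coord:
  fixes i :: "'n::finite"
  shows "smooth_real G \<Longrightarrow> smooth_fn (\<lambda>x::real^'n. G (x $ i))"
  unfolding smooth_fn_def
proof (intro allI)
  fix ks and x :: "real^'n"
  assume "smooth_real G"
  then obtain H where "smooth_real H" "pds ks (\<lambda>x::real^'n. G (x $ i)) = (\<lambda>x. H (x $ i))"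
    by (rule pds_coord)
  then show "pds ks (\<lambda>x::real^'n. G (x $ i)) differentiable at x"
    by (simp add: differentiable_coord smooth_real_differentiable)
qed

lemma axis_eq_scaleR: "axis i t = t *\<^sub>R (axis i 1 :: real^'n::finite)"
  by (simp add: vec_eq_iff axis_def)

lemma differentiable_along_axis:
  fixes i :: "'n::finite"
  assumes "(\<lambda>x::real^'n. G (x $ i)) differentiable at (axis i t)"
  shows "G differentiable at t"
proof -
  have "(\<lambda>t. t *\<^sub>R (axis i 1 :: real^'n)) differentiable at t"
    by (intro derivative_intros)
  then have "(\<lambda>t. axis i t :: real^'n) differentiable at t"
    by (subst axis_eq_scaleR)
  from differentiable_chain_at[OF this assms] show ?thesis
    by (simp add: o_def)
qed

lemma only_coord_axis: "only_coord i f \<Longrightarrow> f x = f (axis i (x $ i))"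
  unfolding only_coord_def by auto

lemma smooth_real_profile:
  fixes i :: "'n::finite" and f :: "real^'n \<Rightarrow> real"
  assumes "smooth_fn f" and "only_coord i f"
  shows "smooth_real (\<lambda>t. f (axis i t))"
proof -
  define F where "F = (\<lambda>t. f (axis i t))"
  have f_F: "f = (\<lambda>x. F (x $ i))"
    unfolding F_def using only_coord_axis[OF assms(2)] by auto
  have pds_diff: "pds ks f differentiable at x" for ks x
    using assms(1) unfolding smooth_fn_def by blast
  have "pds (replicate m i) f = (\<lambda>x. (deriv ^^ m) F (x $ i)) \<and> (\<forall>t. (deriv ^^ m) F differentiable at t)"
    for m
  proof (induction m)
    case 0
    have "F differentiable at t" for t
      using pds_diff[of "[]" "axis i t"] f_F differentiable_along_axis[of F i t] by simp
    with f_F show ?case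
      by simp
  next
    case (Suc m)
    then have pds_Suc: "pds (replicate (Suc m) i) f = (\<lambda>x. (deriv ^^ Suc m) F (x $ i))"
      by (intro ext) (simp add: pd_coord)
    then have "(deriv ^^ Suc m) F differentiable at t" for t
      using pds_diff[of "replicate (Suc m) i" "axis i t"]
        differentiable_along_axis[of "(deriv ^^ Suc m) F" i t] by simp
    with pds_Suc show ?case
      by blast
  qed
  then show ?thesis
    unfolding smooth_real_def F_def[symmetric] by blast
qed

lemma periodic_fn_axis:
  fixes f :: "real^'n::finite \<Rightarrow> 'a"
  assumes "periodic_fn f"
  shows "f (axis i (t + 1)) = f (axis i t)"
proof -
  have "axis i (t + 1) = axis i t + (axis i 1 :: real^'n)"
    by (simp add: vec_eq_iff axis_def)
  then show ?thesis
    using assms unfolding periodic_fn_def by metis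
qed

lemma matrix_inv_eqI:
  fixes A B :: "'a::comm_ring_1^'n::finite^'n"
  assumes "A ** B = mat 1" and "B ** A = mat 1"
  shows "matrix_inv A = B"
proof -
  have inv: "A ** matrix_inv A = mat 1 \<and> matrix_inv A ** A = mat 1"
    unfolding matrix_inv_def by (rule someI[of _ B]) (simp add: assms)
  have "matrix_inv A = matrix_inv A ** (A ** B)"
    by (simp add: assms)
  also have "\<dots> = (matrix_inv A ** A) ** B"
    by (simp only: matrix_mul_assoc)
  also have "\<dots> = B"
    using inv by (simp add: matrix_mul_lid)
  finally show ?thesis .
qed

lemma if_zero_mult: "(if P then a else 0) * b = (if P then a * b else (0::'a::mult_zero))"
  by simp

lemma mult_if_zero: "a * (if P then b else 0) = (if P then a * b else (0::'a::mult_zero))"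
  by simp

lemma if_conj_zero: "(if P \<and> Q then a else 0) = (if P then if Q then a else 0 else 0)"
  by simp

lemma sum_if_zero: "(\<Sum>j\<in>S. if P then f j else 0) = (if P then sum f S else 0)"
  by simp

lemmas delta_simps = if_zero_mult mult_if_zero if_conj_zero sum_if_zero

lemma ginv_g_len:
  fixes m :: "real^'n::finite"
  assumes "\<forall>k. m $ k \<noteq> 0"
  shows "ginv (g_len m) x i j = (if i = j then 1 / (m $ i)^2 else 0)"
proof -
  define D :: "real^'n^'n" where "D = (\<chi> a b. if a = b then 1 / (m $ a)^2 else 0)"
  have "(\<chi> a b. g_len m x a b) ** D = mat 1" "D ** (\<chi> a b. g_len m x a b) = mat 1"
    using assms by (simp_all add: vec_eq_iff matrix_matrix_mult_def mat_def D_def g_len_def delta_simps)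
  then show ?thesis
    unfolding ginv_def by (simp add: matrix_inv_eqI D_def)
qed

lemma christ_g_len: "christ (g_len m) k i j = (\<lambda>x. 0)"
  by (simp add: fun_eq_iff christ_def g_len_def pd_const)

lemma scal_g_len: "scal (g_len m) x = 0"
  by (simp add: scal_def ricci_def christ_g_len pd_const)

lemma einstein_constraints_g_len_coord:
  fixes m :: "real^'n::finite" and i1 :: 'n and \<Theta> :: "real \<Rightarrow> real"
  assumes m: "\<forall>k. m $ k \<noteq> 0" and \<Theta>: "\<And>t. \<Theta> differentiable at t"
  shows "einstein_constraints (g_len m) (\<lambda>x i j. if i = i1 \<and> j = i1 then \<Theta> (x $ i1) else 0)"
proof -
  define K where "K = (\<lambda>(x::real^'n) i j. if i = i1 \<and> j = i1 then \<Theta> (x $ i1) else 0)"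
  define a where "a = 1 / (m $ i1)^2"
  note ginv = ginv_g_len[OF m]
  have trace: "trace_g (g_len m) K = (\<lambda>x. a * \<Theta> (x $ i1))"
    by (simp add: fun_eq_iff trace_g_def ginv K_def a_def delta_simps)
  have "normsq_g (g_len m) K x = (a * \<Theta> (x $ i1))^2" for x
    by (simp add: normsq_g_def ginv K_def a_def delta_simps power2_eq_square)
  then have hamiltonian: "scal (g_len m) x - normsq_g (g_len m) K x + (trace_g (g_len m) K x)^2 = 0" for x
    by (simp add: scal_g_len trace)
  have "covK (g_len m) K k i j x = (if i = i1 \<and> j = i1 \<and> k = i1 then deriv \<Theta> (x $ i1) else 0)" for k i j x
    by (simp add: covK_def christ_g_len K_def pd_if pd_const pd_coord[OF \<Theta>])
  then have "divK (g_len m) K j x = (if j = i1 then a * deriv \<Theta> (x $ i1) else 0)" for j x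
    by (simp add: divK_def ginv a_def delta_simps)
  moreover have "pd j (trace_g (g_len m) K) x = (if j = i1 then a * deriv \<Theta> (x $ i1) else 0)" for j x
  proof -
    have "((\<lambda>t. a * \<Theta> t) has_real_derivative a * deriv \<Theta> t) (at t)" for t
      using \<Theta> by (intro DERIV_cmult) (simp add: DERIV_deriv_iff_real_differentiable)
    moreover from this have "(\<lambda>t. a * \<Theta> t) differentiable at t" for t
      using real_differentiable_def by blast
    ultimately show ?thesis
      unfolding trace using pd_coord[of "\<lambda>t. a * \<Theta> t" x i1 j]
      by (simp add: DERIV_imp_deriv)
  qed
  ultimately show ?thesis
    unfolding einstein_constraints_def K_def[symmetric] using hamiltonian by simp
qed

lemma conf_killing_g_len_coord_field:
  fixes l :: "real^'n::finite" and i1 :: 'n and w :: "real \<Rightarrow> real"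
  assumes w: "w differentiable at (x $ i1)"
  shows "conf_killing (g_len l) (\<lambda>y. axis i1 (w (y $ i1))) x i j
           = 2 * deriv w (x $ i1) * sigma_flat i1 l x i j"
proof -
  define W where "W = (\<lambda>y::real^'n. axis i1 (w (y $ i1)))"
  have dW: "pd i (\<lambda>y. W y $ k) x = (if k = i1 \<and> i = i1 then deriv w (x $ i1) else 0)" for i k
    by (simp add: W_def axis_def pd_if pd_const pd_coord[OF w])
  have "lie_g (g_len l) W x i j = (if i = i1 \<and> j = i1 then 2 * (l $ i1)^2 * deriv w (x $ i1) else 0)"
    by (simp add: lie_g_def g_len_def pd_const dW delta_simps sum.distrib)
  moreover have "divW (g_len l) W x = deriv w (x $ i1)"
    by (simp add: divW_def christ_g_len dW delta_simps)
  ultimately show ?thesis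
    unfolding conf_killing_def W_def[symmetric]
    by (auto simp: sigma_flat_def g_len_def kappa_of_def field_simps)
qed

lemma sigma_flat_plus_trace_part:
  fixes l :: "real^'n::finite"
  shows "sigma_flat i1 l x i j + g_len l x i j / real CARD('n)
     = (if i = i1 \<and> j = i1 then (l $ i1)^2 else 0)"
  by (simp add: sigma_flat_def g_len_def kappa_of_def field_simps)

lemma cts_gbar_const:
  fixes l :: "real^'n::finite"
  assumes "c > 0"
  shows "cts_gbar (g_len l) (\<lambda>x. c) = g_len (c powr ((q_of CARD('n) - 2) / 2) *\<^sub>R l)"
proof -
  have "(c powr ((q_of CARD('n) - 2) / 2))^2 = c powr (q_of CARD('n) - 2)"
    using assms by (simp add: power2_eq_square powr_add[symmetric])
  then show ?thesis
    by (simp add: fun_eq_iff cts_gbar_def g_len_def power_mult_distrib)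
qed

lemma cts_Kbar_const:
  fixes l :: "real^'n::finite"
  assumes c: "c > 0" and \<mu>: "\<mu> = \<tau>s * c powr q_of CARD('n)"
    and W: "\<forall>x i j. conf_killing (g_len l) W x i j / (2 * N x)
              = c powr (- q_of CARD('n)) * \<xi> x * sigma_flat i1 l x i j"
  shows "cts_Kbar (g_len l) (\<lambda>x i j. \<mu> * sigma_flat i1 l x i j) \<tau>s \<xi> N (\<lambda>x. c) W
       = (\<lambda>x i j. if i = i1 \<and> j = i1
            then (\<tau>s + c powr (- 2 * q_of CARD('n)) * \<xi> x)
                   * (c powr ((q_of CARD('n) - 2) / 2) * l $ i1)^2
            else 0)"
proof (intro ext, goal_cases)
  case (1 x i j)
  define q where "q = q_of CARD('n)"
  define \<tau> where "\<tau> = \<tau>s + c powr (- 2 * q) * \<xi> x"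
  have factor: "c powr (-2) * (\<mu> + c powr (- q) * \<xi> x) = c powr (q - 2) * \<tau>"
    using c by (simp add: \<mu> \<tau>_def q_def algebra_simps powr_add[symmetric])
  have "cts_Kbar (g_len l) (\<lambda>x i j. \<mu> * sigma_flat i1 l x i j) \<tau>s \<xi> N (\<lambda>x. c) W x i j
      = c powr (-2) * (\<mu> + c powr (- q) * \<xi> x) * sigma_flat i1 l x i j
        + c powr (q - 2) * \<tau> * (g_len l x i j / real CARD('n))"
    unfolding cts_Kbar_def W[rule_format] cts_gbar_def q_def \<tau>_def
    by (simp add: algebra_simps add_divide_distrib)
  also have "\<dots> = c powr (q - 2) * \<tau> * (sigma_flat i1 l x i j + g_len l x i j / real CARD('n))"
    unfolding factor by (simp add: algebra_simps)
  also have "\<dots> = (if i = i1 \<and> j = i1 then \<tau> * (c powr ((q - 2) / 2) * l $ i1)^2 else 0)"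
    using c
    by (simp add: sigma_flat_plus_trace_part power_mult_distrib power2_eq_square powr_add[symmetric])
  finally show ?case
    unfolding \<tau>_def q_def .
qed

lemma prod_indicator_unit_cube:
  fixes x :: "real^'n::finite"
  shows "(\<Prod>b\<in>Basis. indicator {0..1} (x \<bullet> b) :: real) = indicator (cbox 0 One) x"
  by (auto simp: cbox_def split: split_indicator)

lemma has_integral_unit_cube_coord_nonneg:
  fixes h :: "real \<Rightarrow> real" and i :: "'n::finite"
  assumes h: "continuous_on UNIV h" and nonneg: "\<And>t. 0 \<le> h t"
  shows "((\<lambda>x::real^'n. h (x $ i)) has_integral integral {0..1} h) (cbox 0 One)"
proof -
  \<comment> \<open>Tonelli for the product structure of \<open>lborel\<close> on \<open>real^'n\<close>, one factor per basis vector\<close>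
  define f :: "real^'n \<Rightarrow> real \<Rightarrow> real"
    where "f b t = indicator {0..1} t * (if b = axis i 1 then h t else 1)" for b t
  have h_measurable [measurable]: "h \<in> borel_measurable borel"
    using h by (rule borel_measurable_continuous_onI)
  have f_measurable [measurable]: "f b \<in> borel_measurable borel" for b
    unfolding f_def by measurable
  have f_nonneg: "0 \<le> f b t" for b t
    using nonneg by (simp add: f_def)
  have prod_f: "(\<Prod>b\<in>Basis. f b (x \<bullet> b)) = indicator (cbox 0 One) x * h (x $ i)" for x :: "real^'n"
    by (simp add: f_def prod.distrib prod_indicator_unit_cube inner_axis)
  have h_int: "(h has_integral integral {0..1} h) {0..1}"
    using h by (intro integrable_integral integrable_continuous_real) (auto intro: continuous_on_subset)
  have "(\<integral>\<^sup>+t. ennreal (f b t) \<partial>lborel)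
          = (if b = axis i 1 then ennreal (integral {0..1} h) else 1)" for b
    using nn_integral_has_integral_lebesgue[OF _ h_int] nonneg
    by (simp add: f_def ennreal_indicator nn_integral_indicator)
  then have "(\<integral>\<^sup>+x. (\<Prod>b\<in>Basis. ennreal (f b (x \<bullet> b))) \<partial>lborel) = ennreal (integral {0..1} h)"
    by (subst nn_integral_lborel_prod) (auto, measurable)
  then have "(\<integral>\<^sup>+x. ennreal (\<Prod>b\<in>Basis. f b (x \<bullet> b)) \<partial>lborel) = ennreal (integral {0..1} h)"
    using f_nonneg by (simp add: prod_ennreal)
  then have "((\<lambda>x::real^'n. indicator (cbox 0 One) x * h (x $ i)) has_integral integral {0..1} h) UNIV"
    unfolding prod_f using nonneg h_int by (intro nn_integral_has_integral) (auto intro: has_integral_nonneg)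
  moreover have "(\<lambda>x. indicator (cbox 0 One) x * h (x $ i))
                   = (\<lambda>x. if x \<in> cbox 0 One then h (x $ i) else 0)"
    by (simp add: fun_eq_iff)
  ultimately show ?thesis
    by (simp add: has_integral_restrict_UNIV)
qed

lemma has_integral_unit_cube_coord:
  fixes h :: "real \<Rightarrow> real" and i :: "'n::finite"
  assumes h: "continuous_on UNIV h"
  shows "((\<lambda>x::real^'n. h (x $ i)) has_integral integral {0..1} h) (cbox 0 One)"
proof -
  define hp where "hp t = max (h t) 0" for t
  define hm where "hm t = max (- h t) 0" for t
  have cont: "continuous_on UNIV hp" "continuous_on UNIV hm"
    unfolding hp_def hm_def using h by (auto intro!: continuous_intros)
  have "((\<lambda>x::real^'n. hp (x $ i) - hm (x $ i)) has_integral integral {0..1} hp - integral {0..1} hm) (cbox 0 One)"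
    using cont by (intro has_integral_diff has_integral_unit_cube_coord_nonneg) (auto simp: hp_def hm_def)
  moreover have h_eq: "hp t - hm t = h t" for t
    by (auto simp: hp_def hm_def)
  moreover have "integral {0..1} hp - integral {0..1} hm = integral {0..1} h"
    using cont integral_diff[of hp "{0..1}" hm] h_eq
    by (simp add: integrable_continuous_real continuous_on_subset)
  ultimately show ?thesis
    by simp
qed

lemma vol_int_g_len:
  fixes l :: "real^'n::finite"
  shows "vol_int (g_len l) f = (\<Prod>k\<in>UNIV. \<bar>l $ k\<bar>) * integral (cbox 0 One) f"
proof -
  have "det (\<chi> a b. g_len l x a b) = (\<Prod>k\<in>UNIV. (l $ k)^2)" for x
    by (subst det_diagonal) (auto simp: g_len_def)
  moreover have "sqrt (\<Prod>k\<in>UNIV. (l $ k)^2) = (\<Prod>k\<in>UNIV. \<bar>l $ k\<bar>)"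
    by (simp add: prod_power_distrib[symmetric] abs_prod)
  ultimately show ?thesis
    by (simp add: vol_int_def)
qed

lemma periodic_antiderivative:
  fixes h :: "real \<Rightarrow> real"
  assumes cont: "continuous_on UNIV h" and periodic: "\<And>t. h (t + 1) = h t"
    and mean: "integral {0..1} h = 0"
  obtains F where "\<And>t. (F has_real_derivative h t) (at t)" "\<And>t. F (t + 1) = F t"
proof -
  obtain F where F: "\<And>t. (F has_vector_derivative h t) (at t)"
    using einterval_antiderivative[of "-\<infinity>" "\<infinity>" h] cont
    by (auto simp: continuous_on_eq_continuous_at)
  then have F': "(F has_real_derivative h t) (at t)" for t
    by (simp add: has_real_derivative_iff_has_vector_derivative)
  have "(h has_integral (F 1 - F 0)) {0..1}"
    using F by (intro fundamental_theorem_of_calculus) (auto intro: has_vector_derivative_at_within)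
  then have F_period: "F 1 = F 0"
    using mean by (simp add: integral_unique)
  have "((\<lambda>t. F (t + 1) - F t) has_real_derivative 0) (at t)" for t
  proof -
    have "((\<lambda>t. F (t + 1)) has_real_derivative h (t + 1)) (at t)"
      using DERIV_shift[of F "h (t + 1)" t 1] F' by simp
    then show ?thesis
      using DERIV_diff[OF _ F'[of t]] periodic by fastforce
  qed
  then have "F (t + 1) - F t = F (0 + 1) - F 0" for t
    by (rule DERIV_isconst_all[rule_format])
  with F_period have "F (t + 1) = F t" for t
    by simp
  with F' show ?thesis
    by (rule that)
qed

lemma smooth_periodic_potential:
  fixes l :: "real^'n::finite" and i1 :: 'n and \<xi> N :: "real^'n \<Rightarrow> real"
  assumes "\<forall>k. l $ k > 0"
    and "smooth_fn \<xi>" "periodic_fn \<xi>" "only_coord i1 \<xi>"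
    and "smooth_fn N" "periodic_fn N" "only_coord i1 N"
    and "vol_int (g_len l) (\<lambda>x. \<xi> x * N x) = 0"
  obtains F where "smooth_real F" "\<And>t. F (t + 1) = F t"
    "\<And>t. (F has_real_derivative \<xi> (axis i1 t) * N (axis i1 t)) (at t)"
proof -
  define h where "h t = \<xi> (axis i1 t) * N (axis i1 t)" for t
  have smooth: "smooth_real h"
    unfolding h_def using assms by (intro smooth_real_mult smooth_real_profile)
  then have cont: "continuous_on UNIV h"
    by (intro continuous_at_imp_continuous_on ballI differentiable_imp_continuous_within
        smooth_real_differentiable)
  have "h (t + 1) = h t" for t
    unfolding h_def using assms by (simp add: periodic_fn_axis)
  moreover have "integral {0..1} h = 0"
  proof -
    have "(\<lambda>x::real^'n. \<xi> x * N x) = (\<lambda>x. h (x $ i1))"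
      unfolding h_def using assms by (metis only_coord_axis)
    moreover have "(\<Prod>k\<in>UNIV. \<bar>l $ k\<bar>) \<noteq> 0"
      using assms(1) by simp (metis less_irrefl)
    ultimately show ?thesis
      using assms(8) has_integral_unit_cube_coord[OF cont, of i1]
      by (simp add: vol_int_g_len integral_unique)
  qed
  ultimately obtain F where "\<And>t. (F has_real_derivative h t) (at t)" "\<And>t. F (t + 1) = F t"
    using periodic_antiderivative[OF cont] by blast
  with smooth show ?thesis
    using that smooth_real_antiderivative unfolding h_def by blast
qed

lemma periodic_fn_coord_field:
  fixes i :: "'n::finite"
  assumes "\<And>t. w (t + 1) = w t"
  shows "periodic_fn (\<lambda>x::real^'n. axis i (w (x $ i)))"
  unfolding periodic_fn_def
proof (intro allI)
  fix x :: "real^'n" and k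
  have "(x + axis k 1) $ i = (if k = i then x $ i + 1 else x $ i)"
    by (simp add: axis_def)
  then show "axis i (w ((x + axis k 1) $ i)) = axis i (w (x $ i))"
    by (simp add: assms)
qed

lemma smooth_fn_coord_field:
  fixes i :: "'n::finite"
  assumes "smooth_real w"
  shows "smooth_fn (\<lambda>x::real^'n. axis i (w (x $ i)) $ k)"
proof -
  have "(\<lambda>x::real^'n. axis i (w (x $ i)) $ k) = (\<lambda>x. (if k = i then w else (\<lambda>_. 0)) (x $ i))"
    by (simp add: fun_eq_iff axis_def)
  then show ?thesis
    using assms smooth_real_const by (simp add: smooth_fn_coord)
qed

lemma cts_solution_coord_field:
  fixes l :: "real^'n::finite" and i1 :: 'n and \<xi> N :: "real^'n \<Rightarrow> real"
  assumes l: "\<forall>k. l $ k > 0" and \<xi>: "smooth_fn \<xi>" "only_coord i1 \<xi>"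
    and c: "c > 0" and \<mu>: "\<mu> = \<tau>s * c powr q_of CARD('n)"
    and w: "smooth_real w" "\<And>t. w (t + 1) = w t"
    and killing: "\<forall>x i j. conf_killing (g_len l) (\<lambda>y. axis i1 (w (y $ i1))) x i j / (2 * N x)
                    = c powr (- q_of CARD('n)) * \<xi> x * sigma_flat i1 l x i j"
  shows "cts_solution (g_len l) (\<lambda>x i j. \<mu> * sigma_flat i1 l x i j) \<tau>s \<xi> N (\<lambda>x. c)
           (\<lambda>x. axis i1 (w (x $ i1)))"
proof -
  define q where "q = q_of CARD('n)"
  define r where "r = c powr ((q - 2) / 2)"
  define \<Theta> where "\<Theta> t = (\<tau>s + c powr (- 2 * q) * \<xi> (axis i1 t)) * (r * l $ i1)^2" for t
  have "cts_Kbar (g_len l) (\<lambda>x i j. \<mu> * sigma_flat i1 l x i j) \<tau>s \<xi> N (\<lambda>x. c)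
          (\<lambda>x. axis i1 (w (x $ i1)))
      = (\<lambda>x i j. if i = i1 \<and> j = i1 then \<Theta> (x $ i1) else 0)"
    unfolding \<Theta>_def r_def q_def only_coord_axis[OF \<xi>(2), symmetric]
    by (rule cts_Kbar_const[OF c \<mu> killing])
  moreover have "einstein_constraints (g_len (r *\<^sub>R l))
      (\<lambda>x i j. if i = i1 \<and> j = i1 then \<Theta> (x $ i1) else 0)"
  proof (rule einstein_constraints_g_len_coord)
    show "\<forall>k. (r *\<^sub>R l) $ k \<noteq> 0"
      using l c by (simp add: r_def less_imp_neq[symmetric])
    show "\<Theta> differentiable at t" for t
      unfolding \<Theta>_def using \<xi>
      by (intro smooth_real_differentiable smooth_real_mult smooth_real_add smooth_real_const
          smooth_real_profile)
  qed
  moreover have "smooth_fn (\<lambda>x::real^'n. c)"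
    by (rule smooth_fn_coord[OF smooth_real_const])
  ultimately show ?thesis
    using c w unfolding cts_solution_def
    by (simp add: cts_gbar_const r_def q_def periodic_fn_coord_field smooth_fn_coord_field)
        (simp add: periodic_fn_def)
qed

lemma cts_solution_const_factor:
  fixes l :: "real^'n::finite" and i1 :: 'n and \<mu> \<tau>s c :: real and \<xi> N :: "real^'n \<Rightarrow> real"
  assumes l: "\<forall>k. l $ k > 0"
    and \<xi>: "smooth_fn \<xi>" "periodic_fn \<xi>" "only_coord i1 \<xi>"
    and N: "smooth_fn N" "periodic_fn N" "only_coord i1 N" "\<forall>x. N x > 0"
    and mean: "vol_int (g_len l) (\<lambda>x. \<xi> x * N x) = 0"
    and c: "c > 0" and \<mu>: "\<mu> = \<tau>s * c powr q_of CARD('n)"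
  shows "\<exists>W. (\<forall>x k. k \<noteq> i1 \<longrightarrow> W x $ k = 0) \<and>
             cts_solution (g_len l) (\<lambda>x i j. \<mu> * sigma_flat i1 l x i j) \<tau>s \<xi> N (\<lambda>x. c) W \<and>
             (\<forall>x i j. conf_killing (g_len l) W x i j / (2 * N x)
                        = c powr (- q_of CARD('n)) * \<xi> x * sigma_flat i1 l x i j) \<and>
             cts_gbar (g_len l) (\<lambda>x. c) = g_len (c powr ((q_of CARD('n) - 2) / 2) *\<^sub>R l) \<and>
             cts_Kbar (g_len l) (\<lambda>x i j. \<mu> * sigma_flat i1 l x i j) \<tau>s \<xi> N (\<lambda>x. c) W
               = (\<lambda>x i j. if i = i1 \<and> j = i1
                    then (\<tau>s + c powr (- 2 * q_of CARD('n)) * \<xi> x)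
                           * (c powr ((q_of CARD('n) - 2) / 2) * l $ i1)^2
                    else 0)"
proof -
  obtain F where F: "smooth_real F" "\<And>t. F (t + 1) = F t"
    "\<And>t. (F has_real_derivative \<xi> (axis i1 t) * N (axis i1 t)) (at t)"
    using smooth_periodic_potential[OF l \<xi> N(1-3) mean] by blast
  define w where "w t = c powr (- q_of CARD('n)) * F t" for t
  have w_smooth: "smooth_real w"
    unfolding w_def by (intro smooth_real_mult smooth_real_const F(1))
  have w_periodic: "w (t + 1) = w t" for t
    by (simp add: w_def F(2))
  have w': "deriv w t = c powr (- q_of CARD('n)) * (\<xi> (axis i1 t) * N (axis i1 t))" for t
    unfolding w_def using F(3) by (intro DERIV_imp_deriv DERIV_cmult)
  have killing: "\<forall>x i j. conf_killing (g_len l) (\<lambda>y. axis i1 (w (y $ i1))) x i j / (2 * N x)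
                   = c powr (- q_of CARD('n)) * \<xi> x * sigma_flat i1 l x i j"
  proof (intro allI)
    fix x i j
    have "N x \<noteq> 0"
      using N(4) by (metis less_irrefl)
    then show "conf_killing (g_len l) (\<lambda>y. axis i1 (w (y $ i1))) x i j / (2 * N x)
                 = c powr (- q_of CARD('n)) * \<xi> x * sigma_flat i1 l x i j"
      by (simp add: conf_killing_g_len_coord_field smooth_real_differentiable[OF w_smooth] w'
          only_coord_axis[OF \<xi>(3), symmetric] only_coord_axis[OF N(3), symmetric])
  qed
  have "\<forall>x k. k \<noteq> i1 \<longrightarrow> axis i1 (w (x $ i1)) $ k = 0"
    by (simp add: axis_def)
  then show ?thesis
    using cts_solution_coord_field[OF l \<xi>(1,3) c \<mu> w_smooth w_periodic killing]
      killing cts_gbar_const[OF c] cts_Kbar_const[OF c \<mu> killing]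
    by (intro exI[of _ "\<lambda>x. axis i1 (w (x $ i1))"]) blast
qed

theorem proposition7p1:
  fixes l :: "real^'n::finite" and i1 :: 'n and \<mu> \<tau>s :: real and \<xi> N :: "real^'n \<Rightarrow> real"
  assumes "CARD('n) \<ge> 3"
    and "\<forall>k. l $ k > 0"
    and "smooth_fn \<xi>" and "periodic_fn \<xi>" and "only_coord i1 \<xi>"
    and "smooth_fn N" and "periodic_fn N" and "only_coord i1 N" and "\<forall>x. N x > 0"
    and "vol_int (g_len l) (\<lambda>x. \<xi> x * N x) = 0"
  shows
   "(\<mu> \<noteq> 0 \<and> \<tau>s \<noteq> 0 \<and> sgn \<mu> = sgn \<tau>s \<longrightarrow>
      (let c = (\<mu> / \<tau>s) powr (1 / q_of CARD('n));
           r = c powr ((q_of CARD('n) - 2) / 2) in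
        r = (\<mu> / \<tau>s) powr (1 / real CARD('n)) \<and>
        (\<exists>W. (\<forall>x k. k \<noteq> i1 \<longrightarrow> W x $ k = 0) \<and>
             cts_solution (g_len l) (\<lambda>x i j. \<mu> * sigma_flat i1 l x i j) \<tau>s \<xi> N (\<lambda>x. c) W \<and>
             (\<forall>x i j. conf_killing (g_len l) W x i j / (2 * N x)
                        = c powr (- q_of CARD('n)) * \<xi> x * sigma_flat i1 l x i j) \<and>
             cts_gbar (g_len l) (\<lambda>x. c) = g_len (r *\<^sub>R l) \<and>
             cts_Kbar (g_len l) (\<lambda>x i j. \<mu> * sigma_flat i1 l x i j) \<tau>s \<xi> N (\<lambda>x. c) W
               = (\<lambda>x i j. if i = i1 \<and> j = i1
                    then (\<tau>s + c powr (- 2 * q_of CARD('n)) * \<xi> x) * (r * l $ i1)^2 else 0))))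
    \<and>
    (\<mu> = 0 \<and> \<tau>s = 0 \<longrightarrow>
      (\<forall>c > 0. let r = c powr ((q_of CARD('n) - 2) / 2) in
        (\<exists>W. cts_solution (g_len l) (\<lambda>x i j. \<mu> * sigma_flat i1 l x i j) \<tau>s \<xi> N (\<lambda>x. c) W \<and>
             (\<forall>x i j. conf_killing (g_len l) W x i j / (2 * N x)
                        = c powr (- q_of CARD('n)) * \<xi> x * sigma_flat i1 l x i j) \<and>
             cts_gbar (g_len l) (\<lambda>x. c) = g_len (r *\<^sub>R l) \<and>
             cts_Kbar (g_len l) (\<lambda>x i j. \<mu> * sigma_flat i1 l x i j) \<tau>s \<xi> N (\<lambda>x. c) W
               = (\<lambda>x i j. if i = i1 \<and> j = i1
                    then (c powr (- 2 * q_of CARD('n)) * \<xi> x) * (r * l $ i1)^2 else 0))))"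
proof (intro conjI impI allI, goal_cases)
  case 1
  define q where "q = q_of CARD('n)"
  define c where "c = (\<mu> / \<tau>s) powr (1 / q)"
  have q_pos: "q > 0" and q_exp: "1 / q * ((q - 2) / 2) = 1 / real CARD('n)"
    using assms(1) by (simp_all add: q_def q_of_def field_simps)
  have ratio_pos: "\<mu> / \<tau>s > 0"
    using 1 by (auto simp: sgn_if zero_less_divide_iff split: if_splits)
  have "c powr q = (\<mu> / \<tau>s) powr 1"
    using q_pos unfolding c_def powr_powr by simp
  also have "\<dots> = \<mu> / \<tau>s"
    using ratio_pos by (intro powr_one) simp
  finally have \<mu>: "\<mu> = \<tau>s * c powr q_of CARD('n)"
    using 1 by (simp add: q_def[symmetric])
  have "c > 0"
    using 1 by (simp add: c_def)
  have "c powr ((q - 2) / 2) = (\<mu> / \<tau>s) powr (1 / real CARD('n))"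
    unfolding c_def powr_powr q_exp ..
  then show ?case
    using cts_solution_const_factor[OF assms(2-10) \<open>c > 0\<close> \<mu>]
    unfolding Let_def c_def[unfolded q_def, symmetric] q_def by blast
next
  case (2 c)
  then have \<tau>s: "\<tau>s = 0" and \<mu>: "\<mu> = \<tau>s * c powr q_of CARD('n)"
    by simp_all
  show ?case
    using cts_solution_const_factor[OF assms(2-10) \<open>c > 0\<close> \<mu>]
    unfolding Let_def \<tau>s add_0_left by blast
qed

end
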